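(* In the line network setting of the context, let $\lambda_{\min}>0$ be such that (P) is feasible for both $\mathbf{G}_{\mathrm{HD}}$ and $\mathbf{G}_{\mathrm{FD}}$ with $t^*_{\mathrm{HD}}>0$. Let $\eta\in(0,1)$, $\delta^*_{\mathrm{HD}}=-\log(1-\eta)/t^*_{\mathrm{HD}}$, $\delta^*_{\mathrm{FD}}=-\log(1-\eta)/t^*_{\mathrm{FD}}$, and $\ell=\delta^*_{\mathrm{HD}}/\delta^*_{\mathrm{FD}}$. Then with $$\Lambda_1=\frac{R_a}{4(K+1)\left(\frac{R_a}{R_b}\right)^2+(2K+3)w\frac{R_a}{R_b}+w},\qquad \Lambda_2=\frac{R_a}{(K+1)\left(\frac{R_a}{R_b}\right)^2+(K+1)w\frac{R_a}{R_b}+w},$$ $$\ell=\begin{cases}\dfrac{1-w\lambda_{\min}\left(\frac1{R_b}+\frac1{R_a}\right)}{1-w\lambda_{\min}\left(\frac3{R_b}+\frac1{R_a}\right)}\cdot\dfrac{\frac{2(K+1)}{R_b}+\frac{Kw}{R_a}}{\frac{K+1}{R_b}+\frac{Kw}{R_a}}, & \lambda_{\min}\le\Lambda_1,\\[3ex] \dfrac{1-w\lambda_{\min}\left(\frac1{R_b}+\frac1{R_a}\right)}{1-w\lambda_{\min}\left(\frac{2K-1}{R_b}+\frac1{R_a}\right)}\cdot\dfrac{\frac{2(K+1)}{R_b}+\frac{2w}{R_a}}{\frac{K+1}{R_b}+\frac{Kw}{R_a}}, & \Lambda_1<\lambda_{\min}\le\Lambda_2,\\[3ex] 2\,\dfrac{1-w\lambda_{\min}\left(\frac{K}{R_b}+\frac1{R_a}\right)}{1-w\lambda_{\min}\left(\frac{2K-1}{R_b}+\frac1{R_a}\right)},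 & \lambda_{\min}>\Lambda_2.\end{cases}$$
   Context: General setting: a rooted tree with root the donor (vertex $0$), other internal vertices IAB nodes $1,\dots,K$, leaves $M$ user equipments (UEs); vertices $0,\dots,K$ are base stations (BSs). Each non-root vertex $v$ has a unique parent and the edge from its parent to $v$ is indexed by $v$; $\mathcal{E}$ is the edge set. For each UE $m$, $\mathsf{R}(m)$ is the set of edges on the path from $0$ to $m$ and $h_m=|\mathsf{R}(m)|$. $\mathbf{F}\in\{0,1\}^{|\mathcal{E}|\times M}$ has $F_{v,m}=1$ iff $v\in\mathsf{R}(m)$. $\mathbf{C}=\mathrm{diag}(c_v)$ with $c_v>0$ the capacity of edge $v$. Half-duplex scheduling matrix $\mathbf{G}_{\mathrm{HD}}\in\{0,1\}^{(K+1)\times|\mathcal{E}|}$: $[\mathbf{G}_{\mathrm{HD}}]_{k,v}=1$ iff BS $k$ is the parent or the child of edge $v$; full-duplex $\mathbf{G}_{\mathrm{FD}}$: $[\mathbf{G}_{\mathrm{FD}}]_{k,v}=1$ iff BS $k$ is the parent of edge $v$. Problem (P) for a given $\mathbf{G}$ and $\lambda_{\min}>0$: maximize $t$ over $(t,\boldsymbol{\lambda},\boldsymbol{\mu})\in\mathbb{R}\times\mathbb{R}^M\times\mathbb{R}^{|\mathcal{E}|}$ subject to $\boldsymbol{\lambda}\ge\lambda_{\min}\mathbf{1}$, $\mathbf{0}\le\boldsymbol{\mu}\le\mathbf{1}$, $t\ge0$, $\mathbf{G}\boldsymbol{\mu}\le\mathbf{1}$, and $c_v\mu_v-(\mathbf{F}\boldsymbol{\lambda})_v\ge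 t\,h_m$ for every UE $m$ and every $v\in\mathsf{R}(m)$; $t^*_{\mathrm{HD}}$, $t^*_{\mathrm{FD}}$ denote its optimal values for $\mathbf{G}_{\mathrm{HD}}$, $\mathbf{G}_{\mathrm{FD}}$. Line network: $K\ge2$; IAB node $k$ is the child of BS $k-1$ for $k=1,\dots,K$; each BS $k\in\{0,\dots,K\}$ has, in addition, exactly $w\ge1$ UE children and no other children. Each backhaul edge (into an IAB node) has capacity $R_b$ and each access edge (into a UE) has capacity $R_a$, where $0<R_a<R_b$. Additionally assume $wR_b\le (K+1)R_a$. The same $\mathbf{C}$ is used for both the HD and FD cases. *)

theory Defs
  imports Complex_Main
begin

text \<open>Line network: vertices are base stations BS k (k = 0 is the donor, 1..K the IAB nodes)
 and user equipments UE k j, the j-th UE child (j < w) of BS k.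
 Each non-root vertex v indexes the edge from its parent to v.\<close>

datatype vtx = BS nat | UE nat nat

definition BSs :: "nat \<Rightarrow> vtx set" where
  "BSs K = BS ` {0..K}"

definition UEs :: "nat \<Rightarrow> nat \<Rightarrow> vtx set" where
  "UEs K w = {UE k j | k j. k \<le> K \<and> j < w}"

definition edges :: "nat \<Rightarrow> nat \<Rightarrow> vtx set" where
  "edges K w = BS ` {1..K} \<union> UEs K w"

text \<open>Parent map (the value at the root BS 0 is irrelevant; it is set to BS 0 itself).\<close>
fun parent :: "vtx \<Rightarrow> vtx" where
  "parent (BS k) = BS (k - 1)"
| "parent (UE k j) = BS k"

definition route :: "nat \<Rightarrow> nat \<Rightarrow> vtx \<Rightarrow> vtx set" where
  "route K w m = {v \<in> edges K w. \<exists>n. (parent ^^ n) m = v}"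

fun cap :: "real \<Rightarrow> real \<Rightarrow> vtx \<Rightarrow> real" where
  "cap Ra Rb (BS _) = Rb"
| "cap Ra Rb (UE _ _) = Ra"

text \<open>Scheduling matrices as relations: G b v means [G]_{b,v} = 1.\<close>
definition G_HD :: "vtx \<Rightarrow> vtx \<Rightarrow> bool" where
  "G_HD b v \<longleftrightarrow> b = parent v \<or> b = v"

definition G_FD :: "vtx \<Rightarrow> vtx \<Rightarrow> bool" where
  "G_FD b v \<longleftrightarrow> b = parent v"

definition Flam :: "nat \<Rightarrow> nat \<Rightarrow> (vtx \<Rightarrow> real) \<Rightarrow> vtx \<Rightarrow> real" where
  "Flam K w lam v = (\<Sum>m\<in>{m \<in> UEs K w. v \<in> route K w m}. lam m)"

definition feasibleP ::
  "nat \<Rightarrow> nat \<Rightarrow> real \<Rightarrow> real \<Rightarrow> (vtx \<Rightarrow> vtx \<Rightarrow> bool) \<Rightarrow> real \<Rightarrow>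
   real \<Rightarrow> (vtx \<Rightarrow> real) \<Rightarrow> (vtx \<Rightarrow> real) \<Rightarrow> bool" where
  "feasibleP K w Ra Rb G lmin t lam mu \<longleftrightarrow>
     (\<forall>m\<in>UEs K w. lmin \<le> lam m) \<and>
     (\<forall>v\<in>edges K w. 0 \<le> mu v \<and> mu v \<le> 1) \<and>
     0 \<le> t \<and>
     (\<forall>b\<in>BSs K. (\<Sum>v\<in>{v \<in> edges K w. G b v}. mu v) \<le> 1) \<and>
     (\<forall>m\<in>UEs K w. \<forall>v\<in>route K w m.
        cap Ra Rb v * mu v - Flam K w lam v \<ge> t * real (card (route K w m)))"

definition P_feasible ::
  "nat \<Rightarrow> nat \<Rightarrow> real \<Rightarrow> real \<Rightarrow> (vtx \<Rightarrow> vtx \<Rightarrow> bool) \<Rightarrow> real \<Rightarrow> bool" where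
  "P_feasible K w Ra Rb G lmin \<longleftrightarrow> (\<exists>t lam mu. feasibleP K w Ra Rb G lmin t lam mu)"

definition opt_val ::
  "nat \<Rightarrow> nat \<Rightarrow> real \<Rightarrow> real \<Rightarrow> (vtx \<Rightarrow> vtx \<Rightarrow> bool) \<Rightarrow> real \<Rightarrow> real" where
  "opt_val K w Ra Rb G lmin = Sup {t. \<exists>lam mu. feasibleP K w Ra Rb G lmin t lam mu}"

definition Lambda1 :: "nat \<Rightarrow> nat \<Rightarrow> real \<Rightarrow> real \<Rightarrow> real" where
  "Lambda1 K w Ra Rb = Ra / (4 * (real K + 1) * (Ra / Rb)^2
      + (2 * real K + 3) * real w * (Ra / Rb) + real w)"

definition Lambda2 :: "nat \<Rightarrow> nat \<Rightarrow> real \<Rightarrow> real \<Rightarrow> real" where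
  "Lambda2 K w Ra Rb = Ra / ((real K + 1) * (Ra / Rb)^2
      + (real K + 1) * real w * (Ra / Rb) + real w)"

end

theory Submission
  imports Defs
begin

text \<open>Every feasible point dominates, edge by edge, the minimal allocation in which every UE
  gets exactly rate \<open>\<lambda>\<^sub>m\<^sub>i\<^sub>n\<close> and every edge the smallest time share its rate constraint allows;
  conversely this allocation is feasible as soon as it respects the scheduling constraints.
  Hence \<open>t\<^sup>*\<close> is the largest \<open>t\<close> for which the load of every base station under the minimal
  allocation is at most 1. On the line network the load of IAB node \<open>k\<close> is affine in \<open>t\<close>, so it
  bounds \<open>t\<close> by a linear-fractional function of \<open>k\<close>, while the loads of the two end stations
  are dominated by those of their neighbours (here \<open>w R\<^sub>b \<le> (K + 1) R\<^sub>a\<close> is used). A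
  linear-fractional function is monotone, so \<open>t\<^sup>*\<close> is its smaller value at the two outermost
  interior nodes; which one is smaller depends on the sign of its determinant, that is, on
  comparing \<open>\<lambda>\<^sub>m\<^sub>i\<^sub>n\<close> with \<open>\<Lambda>\<^sub>1\<close> (half duplex) or \<open>\<Lambda>\<^sub>2\<close> (full duplex). Since
  \<open>\<ell> = t\<^sup>*\<^sub>F\<^sub>D / t\<^sup>*\<^sub>H\<^sub>D\<close>, the three cases follow.\<close>

lemma linear_fractional_mono:
  fixes p q r s x y :: real
  assumes "0 < r + s * x" "0 < r + s * y" "x \<le> y" "0 \<le> q * r - p * s"
  shows "(p + q * x) / (r + s * x) \<le> (p + q * y) / (r + s * y)"
proof -
  have "(p + q * y) * (r + s * x) - (p + q * x) * (r + s * y) = (y - x) * (q * r - p * s)"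
    by (simp add: algebra_simps)
  also have "\<dots> \<ge> 0" using assms by simp
  finally show ?thesis using assms by (simp add: divide_simps)
qed

lemma linear_fractional_antimono:
  fixes p q r s x y :: real
  assumes "0 < r + s * x" "0 < r + s * y" "x \<le> y" "q * r - p * s \<le> 0"
  shows "(p + q * y) / (r + s * y) \<le> (p + q * x) / (r + s * x)"
proof -
  have "(p + q * x) * (r + s * y) - (p + q * y) * (r + s * x) = (y - x) * (p * s - q * r)"
    by (simp add: algebra_simps)
  also have "\<dots> \<ge> 0" using assms by simp
  finally show ?thesis using assms by (simp add: divide_simps)
qed

lemma linear_fractional_ge_min:
  fixes p q r s x y z :: real
  assumes "0 < r + s * x" "0 < r + s * y" "x \<le> z" "z \<le> y"
  shows "min ((p + q * x) / (r + s * x)) ((p + q * y) / (r + s * y)) \<le> (p + q * z) / (r + s * z)"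
proof -
  have "0 < r + s * z"
  proof (cases "0 \<le> s")
    case True
    then show ?thesis using assms mult_left_mono[of x z s] by linarith
  next
    case False
    then show ?thesis using assms mult_left_mono_neg[of z y s] by linarith
  qed
  then show ?thesis
    using linear_fractional_mono[of r s x z q p] linear_fractional_antimono[of r s z y q p] assms
    by (cases "0 \<le> q * r - p * s") auto
qed

lemma parent_pow_UE: "(parent ^^ n) (UE k j) = (if n = 0 then UE k j else BS (k - (n - 1)))"
  by (induction n) auto

lemma UE_in_UEs_iff [simp]: "UE k j \<in> UEs K w \<longleftrightarrow> k \<le> K \<and> j < w"
  by (auto simp: UEs_def)

lemma BS_in_edges_iff [simp]: "BS i \<in> edges K w \<longleftrightarrow> 1 \<le> i \<and> i \<le> K"
  by (auto simp: edges_def UEs_def)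

lemma UE_in_edges_iff [simp]: "UE k j \<in> edges K w \<longleftrightarrow> k \<le> K \<and> j < w"
  by (auto simp: edges_def)

lemma finite_UEs: "finite (UEs K w)"
proof -
  have "UEs K w = (\<lambda>(k, j). UE k j) ` ({..K} \<times> {..<w})" by (auto simp: UEs_def)
  then show ?thesis by simp
qed

lemma finite_edges: "finite (edges K w)"
  by (simp add: edges_def finite_UEs)

lemma route_UE:
  assumes "k \<le> K" "j < w"
  shows "route K w (UE k j) = insert (UE k j) (BS ` {1..k})"
proof (rule set_eqI)
  fix v
  have "v \<in> route K w (UE k j) \<longleftrightarrow> v \<in> edges K w \<and> (v = UE k j \<or> (\<exists>n>0. v = BS (k - (n - 1))))"
    by (auto simp: route_def parent_pow_UE intro: exI[of _ 0])
  also have "\<dots> \<longleftrightarrow> v \<in> insert (UE k j) (BS ` {1..k})"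
  proof -
    have "(\<exists>n>0. i = k - (n - 1)) \<longleftrightarrow> i \<le> k" for i
      by (auto intro: exI[of _ "k - i + 1"])
    then show ?thesis using assms by (cases v) auto
  qed
  finally show "v \<in> route K w (UE k j) \<longleftrightarrow> v \<in> insert (UE k j) (BS ` {1..k})" .
qed

lemma card_route_UE:
  assumes "k \<le> K" "j < w"
  shows "card (route K w (UE k j)) = k + 1"
  using assms by (simp add: route_UE card_image inj_on_def image_iff)

lemma users_of_BS:
  assumes "1 \<le> i"
  shows "{m \<in> UEs K w. BS i \<in> route K w m} = (\<lambda>(k, j). UE k j) ` ({i..K} \<times> {..<w})"
  using assms by (force simp: UEs_def route_UE)

lemma users_of_UE:
  assumes "k \<le> K" "j < w"
  shows "{m \<in> UEs K w. UE k j \<in> route K w m} = {UE k j}"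
  using assms by (auto simp: UEs_def route_UE)

lemma Flam_UE: "k \<le> K \<Longrightarrow> j < w \<Longrightarrow> Flam K w lam (UE k j) = lam (UE k j)"
  by (simp add: Flam_def users_of_UE)

lemma Flam_BS_const:
  assumes "1 \<le> i" "i \<le> K"
  shows "Flam K w (\<lambda>_. l) (BS i) = (real K + 1 - real i) * real w * l"
proof -
  have "inj_on (\<lambda>(k, j). UE k j) ({i..K} \<times> {..<w})" by (auto simp: inj_on_def)
  then show ?thesis using assms
    by (simp add: Flam_def users_of_BS card_image card_cartesian_product)
qed

lemma Flam_mono:
  assumes "\<forall>m\<in>UEs K w. lam m \<le> lam' m"
  shows "Flam K w lam v \<le> Flam K w lam' v"
  unfolding Flam_def using assms finite_UEs by (intro sum_mono) auto

text \<open>The smallest time share of edge v compatible with throughput t when every UE gets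
  rate l; on a backhaul edge the binding route is the longest one, with K + 1 hops.\<close>
fun min_alloc :: "nat \<Rightarrow> nat \<Rightarrow> real \<Rightarrow> real \<Rightarrow> real \<Rightarrow> real \<Rightarrow> vtx \<Rightarrow> real" where
  "min_alloc K w Ra Rb l t (BS i) = (t * (real K + 1) + (real K + 1 - real i) * real w * l) / Rb"
| "min_alloc K w Ra Rb l t (UE k j) = (t * (real k + 1) + l) / Ra"

definition load ::
  "nat \<Rightarrow> nat \<Rightarrow> real \<Rightarrow> real \<Rightarrow> (vtx \<Rightarrow> vtx \<Rightarrow> bool) \<Rightarrow> real \<Rightarrow> real \<Rightarrow> vtx \<Rightarrow> real" where
  "load K w Ra Rb G l t b = (\<Sum>v\<in>{v \<in> edges K w. G b v}. min_alloc K w Ra Rb l t v)"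

lemma min_alloc_le:
  assumes f: "feasibleP K w Ra Rb G l t lam mu" and "0 < Ra" "0 < Rb" "1 \<le> w"
    and v: "v \<in> edges K w"
  shows "min_alloc K w Ra Rb l t v \<le> mu v"
proof -
  have rate: "t * real (card (route K w m)) \<le> cap Ra Rb u * mu u - Flam K w lam u"
    if "m \<in> UEs K w" "u \<in> route K w m" for m u
    using f that unfolding feasibleP_def by blast
  show ?thesis
  proof (cases v)
    case (BS i)
    then have i: "1 \<le> i" "i \<le> K" using v by auto
    have "UE K 0 \<in> UEs K w" "BS i \<in> route K w (UE K 0)"
      using i assms by (auto simp: route_UE)
    from rate[OF this] have "t * (real K + 1) \<le> Rb * mu (BS i) - Flam K w lam (BS i)"
      using assms by (simp add: card_route_UE add.commute)
    moreover have "Flam K w (\<lambda>_. l) (BS i) \<le> Flam K w lam (BS i)"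
      using f unfolding feasibleP_def by (intro Flam_mono) auto
    ultimately show ?thesis using BS i \<open>0 < Rb\<close> by (simp add: Flam_BS_const field_simps)
  next
    case (UE k j)
    then have kj: "k \<le> K" "j < w" using v by auto
    then have "UE k j \<in> UEs K w" "UE k j \<in> route K w (UE k j)" by (auto simp: route_UE)
    then have "t * (real k + 1) \<le> Ra * mu (UE k j) - lam (UE k j)" "l \<le> lam (UE k j)"
      using rate[of "UE k j" "UE k j"] f kj unfolding feasibleP_def
      by (simp_all add: card_route_UE Flam_UE add.commute)
    then show ?thesis using UE \<open>0 < Ra\<close> by (simp add: field_simps)
  qed
qed

lemma load_le_one_if_feasible:
  assumes f: "feasibleP K w Ra Rb G l t lam mu" and "0 < Ra" "0 < Rb" "1 \<le> w"
    and "b \<in> BSs K"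
  shows "load K w Ra Rb G l t b \<le> 1"
proof -
  have "load K w Ra Rb G l t b \<le> (\<Sum>v\<in>{v \<in> edges K w. G b v}. mu v)"
    unfolding load_def using min_alloc_le[OF assms(1-4)] finite_edges by (intro sum_mono) auto
  also have "\<dots> \<le> 1" using f assms unfolding feasibleP_def by blast
  finally show ?thesis .
qed

lemma feasible_min_alloc:
  assumes "0 \<le> t" "0 \<le> l" "0 < Ra" "0 < Rb"
    and G: "\<And>v. G (parent v) v"
    and loads: "\<forall>b\<in>BSs K. load K w Ra Rb G l t b \<le> 1"
  shows "feasibleP K w Ra Rb G l t (\<lambda>_. l) (min_alloc K w Ra Rb l t)"
proof -
  let ?mu = "min_alloc K w Ra Rb l t"
  have nonneg: "0 \<le> ?mu v" if "v \<in> edges K w" for v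
    using that assms by (cases v) auto
  have le_one: "?mu v \<le> 1" if v: "v \<in> edges K w" for v
  proof -
    have "parent v \<in> BSs K" using v by (cases v) (auto simp: BSs_def)
    have "?mu v \<le> load K w Ra Rb G l t (parent v)"
      unfolding load_def using v G nonneg finite_edges by (intro member_le_sum) auto
    also have "\<dots> \<le> 1" using loads \<open>parent v \<in> BSs K\<close> by blast
    finally show ?thesis .
  qed
  have rate: "cap Ra Rb v * ?mu v - Flam K w (\<lambda>_. l) v \<ge> t * real (card (route K w m))"
    if m: "m \<in> UEs K w" and v: "v \<in> route K w m" for m v
  proof -
    obtain k j where kj: "m = UE k j" "k \<le> K" "j < w" using m by (auto simp: UEs_def)
    then consider "v = UE k j" | i where "v = BS i" "1 \<le> i" "i \<le> k"
      using v route_UE by auto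
    then show ?thesis
    proof cases
      case 1
      then show ?thesis using kj assms by (simp add: card_route_UE Flam_UE add.commute)
    next
      case (2 i)
      have "t * (real k + 1) \<le> t * (real K + 1)" using kj assms by (intro mult_left_mono) auto
      then show ?thesis using 2 kj assms by (simp add: card_route_UE Flam_BS_const add.commute)
    qed
  qed
  show ?thesis unfolding feasibleP_def using assms(1-4) loads[unfolded load_def] nonneg le_one rate by auto
qed

lemma feasible_values_eq:
  assumes "0 \<le> l" "0 < Ra" "0 < Rb" "1 \<le> w" "\<And>v. G (parent v) v"
  shows "{t. \<exists>lam mu. feasibleP K w Ra Rb G l t lam mu}
       = {t. 0 \<le> t \<and> (\<forall>b\<in>BSs K. load K w Ra Rb G l t b \<le> 1)}"
proof (intro set_eqI iffI; clarsimp)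
  fix t lam mu assume "feasibleP K w Ra Rb G l t lam mu"
  then show "0 \<le> t \<and> (\<forall>b\<in>BSs K. load K w Ra Rb G l t b \<le> 1)"
    using load_le_one_if_feasible assms by (auto simp: feasibleP_def)
next
  fix t assume "0 \<le> t" "\<forall>b\<in>BSs K. load K w Ra Rb G l t b \<le> 1"
  then show "\<exists>lam mu. feasibleP K w Ra Rb G l t lam mu"
    using feasible_min_alloc assms by blast
qed

lemma opt_val_eq:
  assumes "0 \<le> l" "0 < Ra" "0 < Rb" "1 \<le> w" "\<And>v. G (parent v) v"
    and "P_feasible K w Ra Rb G l"
    and T: "\<And>t. 0 \<le> t \<Longrightarrow> (\<forall>b\<in>BSs K. load K w Ra Rb G l t b \<le> 1) \<longleftrightarrow> t \<le> T"
  shows "opt_val K w Ra Rb G l = T"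
proof -
  have "{t. \<exists>lam mu. feasibleP K w Ra Rb G l t lam mu}
      = {t. 0 \<le> t \<and> (\<forall>b\<in>BSs K. load K w Ra Rb G l t b \<le> 1)}"
    by (rule feasible_values_eq) (use assms in auto)
  then have feasible_values: "{t. \<exists>lam mu. feasibleP K w Ra Rb G l t lam mu} = {0..T}"
    using T by force
  moreover obtain t0 lam mu where "feasibleP K w Ra Rb G l t0 lam mu"
    using \<open>P_feasible K w Ra Rb G l\<close> unfolding P_feasible_def by blast
  ultimately have "t0 \<in> {0..T}" by blast
  then have "0 \<le> T" by simp
  then show ?thesis unfolding opt_val_def feasible_values by simp
qed

lemma sum_over_UE_children: "(\<Sum>v\<in>UE k ` {..<w}. f v) = (\<Sum>j<w. f (UE k j))"
  by (simp add: sum.reindex inj_on_def)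

lemma load_HD:
  assumes "k \<le> K"
  shows "load K w Ra Rb G_HD l t (BS k)
    = (\<Sum>i\<in>{k, Suc k} \<inter> {1..K}. min_alloc K w Ra Rb l t (BS i))
      + real w * min_alloc K w Ra Rb l t (UE k 0)"
proof -
  have "{v \<in> edges K w. G_HD (BS k) v} = BS ` ({k, Suc k} \<inter> {1..K}) \<union> UE k ` {..<w}"
    using assms by (auto simp: G_HD_def edges_def UEs_def)
  moreover have "BS ` ({k, Suc k} \<inter> {1..K}) \<inter> UE k ` {..<w} = {}" by auto
  ultimately show ?thesis unfolding load_def
    by (simp add: sum.union_disjoint sum.reindex inj_on_def sum_over_UE_children del: min_alloc.simps) simp
qed

lemma load_FD:
  assumes "k \<le> K"
  shows "load K w Ra Rb G_FD l t (BS k)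
    = (\<Sum>i\<in>{Suc k} \<inter> {1..K}. min_alloc K w Ra Rb l t (BS i))
      + real w * min_alloc K w Ra Rb l t (UE k 0)"
proof -
  have "{v \<in> edges K w. G_FD (BS k) v} = BS ` ({Suc k} \<inter> {1..K}) \<union> UE k ` {..<w}"
    using assms by (auto simp: G_FD_def edges_def UEs_def)
  moreover have "BS ` ({Suc k} \<inter> {1..K}) \<inter> UE k ` {..<w} = {}" by auto
  ultimately show ?thesis unfolding load_def
    by (simp add: sum.union_disjoint sum.reindex inj_on_def sum_over_UE_children del: min_alloc.simps) simp
qed

text \<open>Solving the scheduling constraint of IAB node \<open>k\<close> for \<open>t\<close> gives \<open>t \<le> hd_bound K w Ra Rb l k\<close>
  (resp. \<open>fd_bound\<close>); the node index is taken real since the bound is a linear-fractional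
  function of it.\<close>
definition hd_bound :: "nat \<Rightarrow> nat \<Rightarrow> real \<Rightarrow> real \<Rightarrow> real \<Rightarrow> real \<Rightarrow> real" where
  "hd_bound K w Ra Rb l x = (1 - real w * l * ((2 * real K - 2 * x + 1) / Rb + 1 / Ra))
      / (2 * (real K + 1) / Rb + real w * (x + 1) / Ra)"

definition fd_bound :: "nat \<Rightarrow> nat \<Rightarrow> real \<Rightarrow> real \<Rightarrow> real \<Rightarrow> real \<Rightarrow> real" where
  "fd_bound K w Ra Rb l x = (1 - real w * l * ((real K - x) / Rb + 1 / Ra))
      / ((real K + 1) / Rb + real w * (x + 1) / Ra)"

lemma load_HD_interior_le_one_iff:
  assumes "1 \<le> k" "k < K" "0 < Ra" "0 < Rb"
  shows "load K w Ra Rb G_HD l t (BS k) \<le> 1 \<longleftrightarrow> t \<le> hd_bound K w Ra Rb l (real k)"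
proof -
  define D where "D = 2 * (real K + 1) / Rb + real w * (real k + 1) / Ra"
  have "0 < D" unfolding D_def using assms by (intro add_pos_nonneg) auto
  define c where "c = real w * l * ((2 * real K - 2 * real k + 1) / Rb + 1 / Ra)"
  have "load K w Ra Rb G_HD l t (BS k) = t * D + c"
    using assms by (simp add: load_HD D_def c_def field_simps)
  moreover have "hd_bound K w Ra Rb l (real k) = (1 - c) / D"
    by (simp add: hd_bound_def D_def c_def)
  ultimately show ?thesis using \<open>0 < D\<close> by (simp add: pos_le_divide_eq le_diff_eq)
qed

lemma load_FD_interior_le_one_iff:
  assumes "k < K" "0 < Ra" "0 < Rb"
  shows "load K w Ra Rb G_FD l t (BS k) \<le> 1 \<longleftrightarrow> t \<le> fd_bound K w Ra Rb l (real k)"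
proof -
  define D where "D = (real K + 1) / Rb + real w * (real k + 1) / Ra"
  have "0 < D" unfolding D_def using assms by (intro add_pos_nonneg) auto
  define c where "c = real w * l * ((real K - real k) / Rb + 1 / Ra)"
  have "load K w Ra Rb G_FD l t (BS k) = t * D + c"
    using assms by (simp add: load_FD D_def c_def field_simps)
  moreover have "fd_bound K w Ra Rb l (real k) = (1 - c) / D"
    by (simp add: fd_bound_def D_def c_def)
  ultimately show ?thesis using \<open>0 < D\<close> by (simp add: pos_le_divide_eq le_diff_eq)
qed

lemma load_HD_root_le:
  assumes "2 \<le> K" "0 \<le> t" "0 \<le> l" "0 < Ra" "0 < Rb"
  shows "load K w Ra Rb G_HD l t (BS 0) \<le> load K w Ra Rb G_HD l t (BS 1)"
proof -
  have sets: "{0, Suc 0} \<inter> {1..K} = {1}" "{1, Suc 1} \<inter> {1..K} = {1, 2}" using assms by auto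
  have UE: "real w * (t + l) / Ra \<le> real w * (t * 2 + l) / Ra"
    using assms by (intro divide_right_mono mult_left_mono) auto
  have BS2: "0 \<le> (t * (real K + 1) + (real K - 1) * real w * l) / Rb"
    using assms by simp
  show ?thesis using assms sets by (simp add: load_HD) (use UE BS2 in linarith)
qed

lemma access_le_backhaul_share:
  assumes "real w * Rb \<le> (real K + 1) * Ra" "0 \<le> t" "0 < Ra" "0 < Rb"
  shows "t * real w / Ra \<le> t * (real K + 1) / Rb"
proof -
  have "real w / Ra \<le> (real K + 1) / Rb" using assms by (simp add: field_simps)
  then have "t * (real w / Ra) \<le> t * ((real K + 1) / Rb)" using \<open>0 \<le> t\<close> by (rule mult_left_mono)
  then show ?thesis by simp
qed

lemma load_HD_last_le:
  assumes "2 \<le> K" "0 \<le> t" "0 \<le> l" "0 < Ra" "0 < Rb" "real w * Rb \<le> (real K + 1) * Ra"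
  shows "load K w Ra Rb G_HD l t (BS K) \<le> load K w Ra Rb G_HD l t (BS (K - 1))"
proof -
  have sets: "{K, Suc K} \<inter> {1..K} = {K}" "{K - 1, Suc (K - 1)} \<inter> {1..K} = {K - 1, K}"
    using assms by auto
  have "t * (real K + 1) / Rb \<le> (t * (real K + 1) + 2 * real w * l) / Rb"
    using assms by (intro divide_right_mono) auto
  then have access: "t * real w / Ra \<le> (t * (real K + 1) + 2 * real w * l) / Rb"
    using access_le_backhaul_share[OF assms(6,2,4,5)] by linarith
  have "real w * (t * (real K + 1) + l) / Ra = t * real w / Ra + real w * (t * real K + l) / Ra"
    using assms by (simp add: field_simps)
  then show ?thesis using assms sets by (simp add: load_HD) (use access in linarith)
qed

lemma load_FD_last_le:
  assumes "2 \<le> K" "0 \<le> t" "0 \<le> l" "0 < Ra" "0 < Rb" "real w * Rb \<le> (real K + 1) * Ra"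
  shows "load K w Ra Rb G_FD l t (BS K) \<le> load K w Ra Rb G_FD l t (BS (K - 1))"
proof -
  have sets: "{Suc K} \<inter> {1..K} = {}" "{Suc (K - 1)} \<inter> {1..K} = {K}"
    using assms by auto
  have "t * (real K + 1) / Rb \<le> (t * (real K + 1) + real w * l) / Rb"
    using assms by (intro divide_right_mono) auto
  then have access: "t * real w / Ra \<le> (t * (real K + 1) + real w * l) / Rb"
    using access_le_backhaul_share[OF assms(6,2,4,5)] by linarith
  have "real w * (t * (real K + 1) + l) / Ra = t * real w / Ra + real w * (t * real K + l) / Ra"
    using assms by (simp add: field_simps)
  then show ?thesis using assms sets by (simp add: load_FD) (use access in linarith)
qed

lemma HD_loads_le_one_iff:
  assumes "2 \<le> K" "0 \<le> t" "0 \<le> l" "0 < Ra" "0 < Rb" "real w * Rb \<le> (real K + 1) * Ra"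
  shows "(\<forall>b\<in>BSs K. load K w Ra Rb G_HD l t b \<le> 1)
     \<longleftrightarrow> (\<forall>k\<in>{1..<K}. t \<le> hd_bound K w Ra Rb l (real k))"
proof
  assume loads: "\<forall>b\<in>BSs K. load K w Ra Rb G_HD l t b \<le> 1"
  show "\<forall>k\<in>{1..<K}. t \<le> hd_bound K w Ra Rb l (real k)"
  proof
    fix k assume k: "k \<in> {1..<K}"
    then have "BS k \<in> BSs K" by (simp add: BSs_def)
    with loads have "load K w Ra Rb G_HD l t (BS k) \<le> 1" ..
    then show "t \<le> hd_bound K w Ra Rb l (real k)"
      using load_HD_interior_le_one_iff[of k K Ra Rb] k assms by simp
  qed
next
  assume "\<forall>k\<in>{1..<K}. t \<le> hd_bound K w Ra Rb l (real k)"
  then have interior: "load K w Ra Rb G_HD l t (BS k) \<le> 1" if "1 \<le> k" "k < K" for k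
    using load_HD_interior_le_one_iff[OF that assms(4,5)] that by simp
  show "\<forall>b\<in>BSs K. load K w Ra Rb G_HD l t b \<le> 1"
  proof
    fix b assume "b \<in> BSs K"
    then obtain k where b: "b = BS k" "k \<le> K" by (auto simp: BSs_def)
    consider "k = 0" | "k = K" | "1 \<le> k" "k < K" using b by linarith
    then show "load K w Ra Rb G_HD l t b \<le> 1"
    proof cases
      case 1
      have "load K w Ra Rb G_HD l t (BS 1) \<le> 1" by (rule interior) (use assms in auto)
      then show ?thesis using load_HD_root_le[OF assms(1-5), of w] b 1 by simp
    next
      case 2
      have "load K w Ra Rb G_HD l t (BS (K - 1)) \<le> 1" by (rule interior) (use assms in auto)
      then show ?thesis using load_HD_last_le[OF assms] b 2 by simp
    next
      case 3
      then show ?thesis using interior b by simp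
    qed
  qed
qed

lemma FD_loads_le_one_iff:
  assumes "2 \<le> K" "0 \<le> t" "0 \<le> l" "0 < Ra" "0 < Rb" "real w * Rb \<le> (real K + 1) * Ra"
  shows "(\<forall>b\<in>BSs K. load K w Ra Rb G_FD l t b \<le> 1)
     \<longleftrightarrow> (\<forall>k\<in>{0..<K}. t \<le> fd_bound K w Ra Rb l (real k))"
proof
  assume loads: "\<forall>b\<in>BSs K. load K w Ra Rb G_FD l t b \<le> 1"
  show "\<forall>k\<in>{0..<K}. t \<le> fd_bound K w Ra Rb l (real k)"
  proof
    fix k assume k: "k \<in> {0..<K}"
    then have "BS k \<in> BSs K" by (simp add: BSs_def)
    with loads have "load K w Ra Rb G_FD l t (BS k) \<le> 1" ..
    then show "t \<le> fd_bound K w Ra Rb l (real k)"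
      using load_FD_interior_le_one_iff[of k K Ra Rb] k assms by simp
  qed
next
  assume "\<forall>k\<in>{0..<K}. t \<le> fd_bound K w Ra Rb l (real k)"
  then have below_last: "load K w Ra Rb G_FD l t (BS k) \<le> 1" if "k < K" for k
    using load_FD_interior_le_one_iff[OF that assms(4,5)] that by simp
  show "\<forall>b\<in>BSs K. load K w Ra Rb G_FD l t b \<le> 1"
  proof
    fix b assume "b \<in> BSs K"
    then obtain k where b: "b = BS k" "k \<le> K" by (auto simp: BSs_def)
    consider "k = K" | "k < K" using b by linarith
    then show "load K w Ra Rb G_FD l t b \<le> 1"
    proof cases
      case 1
      have "load K w Ra Rb G_FD l t (BS (K - 1)) \<le> 1" by (rule below_last) (use assms in auto)
      then show ?thesis using load_FD_last_le[OF assms] b 1 by simp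
    next
      case 2
      then show ?thesis using below_last b by simp
    qed
  qed
qed

lemma hd_bound_linear_fractional:
  "hd_bound K w Ra Rb l x
    = ((1 - real w * l * ((2 * real K + 1) / Rb + 1 / Ra)) + 2 * real w * l / Rb * x)
      / ((2 * (real K + 1) / Rb + real w / Ra) + real w / Ra * x)"
  unfolding hd_bound_def by (simp add: algebra_simps add_divide_distrib diff_divide_distrib)

lemma fd_bound_linear_fractional:
  "fd_bound K w Ra Rb l x
    = ((1 - real w * l * (real K / Rb + 1 / Ra)) + real w * l / Rb * x)
      / (((real K + 1) / Rb + real w / Ra) + real w / Ra * x)"
  unfolding fd_bound_def by (simp add: algebra_simps add_divide_distrib diff_divide_distrib)

lemma HD_bounds_iff_min:
  assumes "2 \<le> K" "0 < Ra" "0 < Rb"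
  shows "(\<forall>k\<in>{1..<K}. t \<le> hd_bound K w Ra Rb l (real k))
     \<longleftrightarrow> t \<le> min (hd_bound K w Ra Rb l 1) (hd_bound K w Ra Rb l (real K - 1))"
proof
  assume bounds: "\<forall>k\<in>{1..<K}. t \<le> hd_bound K w Ra Rb l (real k)"
  have "t \<le> hd_bound K w Ra Rb l (real 1)" "t \<le> hd_bound K w Ra Rb l (real (K - 1))"
    by (rule bounds[rule_format]; use assms in auto)+
  then show "t \<le> min (hd_bound K w Ra Rb l 1) (hd_bound K w Ra Rb l (real K - 1))"
    using assms by simp
next
  assume t: "t \<le> min (hd_bound K w Ra Rb l 1) (hd_bound K w Ra Rb l (real K - 1))"
  have pos: "0 < 2 * (real K + 1) / Rb + real w / Ra + real w / Ra * x" if "0 \<le> x" for x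
    using assms that by (intro add_pos_nonneg) auto
  show "\<forall>k\<in>{1..<K}. t \<le> hd_bound K w Ra Rb l (real k)"
  proof
    fix k assume k: "k \<in> {1..<K}"
    have "min (hd_bound K w Ra Rb l 1) (hd_bound K w Ra Rb l (real K - 1))
        \<le> hd_bound K w Ra Rb l (real k)"
      unfolding hd_bound_linear_fractional
      by (rule linear_fractional_ge_min[OF pos pos]) (use k in auto)
    then show "t \<le> hd_bound K w Ra Rb l (real k)" using t by linarith
  qed
qed

lemma FD_bounds_iff_min:
  assumes "2 \<le> K" "0 < Ra" "0 < Rb"
  shows "(\<forall>k\<in>{0..<K}. t \<le> fd_bound K w Ra Rb l (real k))
     \<longleftrightarrow> t \<le> min (fd_bound K w Ra Rb l 0) (fd_bound K w Ra Rb l (real K - 1))"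
proof
  assume bounds: "\<forall>k\<in>{0..<K}. t \<le> fd_bound K w Ra Rb l (real k)"
  have "t \<le> fd_bound K w Ra Rb l (real 0)" "t \<le> fd_bound K w Ra Rb l (real (K - 1))"
    by (rule bounds[rule_format]; use assms in auto)+
  then show "t \<le> min (fd_bound K w Ra Rb l 0) (fd_bound K w Ra Rb l (real K - 1))"
    using assms by simp
next
  assume t: "t \<le> min (fd_bound K w Ra Rb l 0) (fd_bound K w Ra Rb l (real K - 1))"
  have pos: "0 < (real K + 1) / Rb + real w / Ra + real w / Ra * x" if "0 \<le> x" for x
    using assms that by (intro add_pos_nonneg) auto
  show "\<forall>k\<in>{0..<K}. t \<le> fd_bound K w Ra Rb l (real k)"
  proof
    fix k assume k: "k \<in> {0..<K}"
    have "min (fd_bound K w Ra Rb l 0) (fd_bound K w Ra Rb l (real K - 1))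
        \<le> fd_bound K w Ra Rb l (real k)"
      unfolding fd_bound_linear_fractional
      by (rule linear_fractional_ge_min[OF pos pos]) (use k in auto)
    then show "t \<le> fd_bound K w Ra Rb l (real k)" using t by linarith
  qed
qed

lemma hd_bound_min_eq:
  assumes "2 \<le> K" "1 \<le> w" "0 < Ra" "0 < Rb"
  shows "min (hd_bound K w Ra Rb l 1) (hd_bound K w Ra Rb l (real K - 1))
    = (if l \<le> Lambda1 K w Ra Rb then hd_bound K w Ra Rb l (real K - 1) else hd_bound K w Ra Rb l 1)"
proof -
  define p where "p = 1 - real w * l * ((2 * real K + 1) / Rb + 1 / Ra)"
  define q where "q = 2 * real w * l / Rb"
  define r where "r = 2 * (real K + 1) / Rb + real w / Ra"
  define s where "s = real w / Ra"
  define Q where "Q = 4 * (real K + 1) / Rb^2 + (2 * real K + 3) * real w / (Rb * Ra) + real w / Ra^2"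
  have "0 < Q" unfolding Q_def using assms by (intro add_pos_nonneg) auto
  have "Lambda1 K w Ra Rb = (1 / Ra) / Q"
    unfolding Lambda1_def Q_def using assms by (simp add: field_simps power2_eq_square)
  moreover have "q * r - p * s = real w * (l * Q - 1 / Ra)"
    unfolding p_def q_def r_def s_def Q_def using assms by (simp add: field_simps power2_eq_square)
  ultimately have threshold: "l \<le> Lambda1 K w Ra Rb \<longleftrightarrow> q * r - p * s \<le> 0"
    using \<open>0 < Q\<close> assms by (simp add: pos_le_divide_eq mult_le_0_iff mult_ac)
  have bound: "hd_bound K w Ra Rb l x = (p + q * x) / (r + s * x)" for x
    unfolding p_def q_def r_def s_def by (rule hd_bound_linear_fractional)
  have pos: "0 < r + s * x" if "0 \<le> x" for x
    unfolding r_def s_def using assms that by (intro add_pos_nonneg) auto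
  have "1 \<le> real K - 1" using assms by simp
  then have "q * r - p * s \<le> 0 \<Longrightarrow> hd_bound K w Ra Rb l (real K - 1) \<le> hd_bound K w Ra Rb l 1"
    and "0 \<le> q * r - p * s \<Longrightarrow> hd_bound K w Ra Rb l 1 \<le> hd_bound K w Ra Rb l (real K - 1)"
    unfolding bound by (intro linear_fractional_antimono linear_fractional_mono pos; simp)+
  then show ?thesis using threshold by (auto simp: min_def)
qed

lemma fd_bound_min_eq:
  assumes "2 \<le> K" "1 \<le> w" "0 < Ra" "0 < Rb"
  shows "min (fd_bound K w Ra Rb l 0) (fd_bound K w Ra Rb l (real K - 1))
    = (if l \<le> Lambda2 K w Ra Rb then fd_bound K w Ra Rb l (real K - 1) else fd_bound K w Ra Rb l 0)"
proof -
  define p where "p = 1 - real w * l * (real K / Rb + 1 / Ra)"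
  define q where "q = real w * l / Rb"
  define r where "r = (real K + 1) / Rb + real w / Ra"
  define s where "s = real w / Ra"
  define Q where "Q = (real K + 1) / Rb^2 + (real K + 1) * real w / (Rb * Ra) + real w / Ra^2"
  have "0 < Q" unfolding Q_def using assms by (intro add_pos_nonneg) auto
  have "Lambda2 K w Ra Rb = (1 / Ra) / Q"
    unfolding Lambda2_def Q_def using assms by (simp add: field_simps power2_eq_square)
  moreover have "q * r - p * s = real w * (l * Q - 1 / Ra)"
    unfolding p_def q_def r_def s_def Q_def using assms by (simp add: field_simps power2_eq_square)
  ultimately have threshold: "l \<le> Lambda2 K w Ra Rb \<longleftrightarrow> q * r - p * s \<le> 0"
    using \<open>0 < Q\<close> assms by (simp add: pos_le_divide_eq mult_le_0_iff mult_ac)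
  have bound: "fd_bound K w Ra Rb l x = (p + q * x) / (r + s * x)" for x
    unfolding p_def q_def r_def s_def by (rule fd_bound_linear_fractional)
  have pos: "0 < r + s * x" if "0 \<le> x" for x
    unfolding r_def s_def using assms that by (intro add_pos_nonneg) auto
  have "0 \<le> real K - 1" using assms by simp
  then have "q * r - p * s \<le> 0 \<Longrightarrow> fd_bound K w Ra Rb l (real K - 1) \<le> fd_bound K w Ra Rb l 0"
    and "0 \<le> q * r - p * s \<Longrightarrow> fd_bound K w Ra Rb l 0 \<le> fd_bound K w Ra Rb l (real K - 1)"
    unfolding bound by (intro linear_fractional_antimono linear_fractional_mono pos; simp)+
  then show ?thesis using threshold by (auto simp: min_def)
qed

lemma opt_val_HD:
  assumes "2 \<le> K" "1 \<le> w" "0 < Ra" "0 < Rb" "real w * Rb \<le> (real K + 1) * Ra" "0 \<le> l"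
    and "P_feasible K w Ra Rb G_HD l"
  shows "opt_val K w Ra Rb G_HD l
    = (if l \<le> Lambda1 K w Ra Rb then hd_bound K w Ra Rb l (real K - 1) else hd_bound K w Ra Rb l 1)"
  unfolding hd_bound_min_eq[OF assms(1-4), symmetric]
  using assms HD_loads_le_one_iff HD_bounds_iff_min
  by (intro opt_val_eq) (auto simp: G_HD_def)

lemma opt_val_FD:
  assumes "2 \<le> K" "1 \<le> w" "0 < Ra" "0 < Rb" "real w * Rb \<le> (real K + 1) * Ra" "0 \<le> l"
    and "P_feasible K w Ra Rb G_FD l"
  shows "opt_val K w Ra Rb G_FD l
    = (if l \<le> Lambda2 K w Ra Rb then fd_bound K w Ra Rb l (real K - 1) else fd_bound K w Ra Rb l 0)"
  unfolding fd_bound_min_eq[OF assms(1-4), symmetric]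
  using assms FD_loads_le_one_iff FD_bounds_iff_min
  by (intro opt_val_eq) (auto simp: G_FD_def)

lemma Lambda1_le_Lambda2:
  assumes "0 < Ra" "0 < Rb"
  shows "Lambda1 K w Ra Rb \<le> Lambda2 K w Ra Rb"
proof -
  define x where "x = Ra / Rb"
  have "0 < x" unfolding x_def using assms by simp
  define D1 where "D1 = 4 * (real K + 1) * x^2 + (2 * real K + 3) * real w * x + real w"
  define D2 where "D2 = (real K + 1) * x^2 + (real K + 1) * real w * x + real w"
  have "0 < D2" unfolding D2_def using \<open>0 < x\<close> by (intro add_pos_nonneg) auto
  moreover have "D2 \<le> D1"
    unfolding D1_def D2_def using \<open>0 < x\<close> by (intro add_mono mult_right_mono) auto
  ultimately have "Ra / D1 \<le> Ra / D2"
    using assms by (intro divide_left_mono) auto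
  then show ?thesis unfolding Lambda1_def Lambda2_def D1_def D2_def x_def .
qed

lemma hd_bound_at_ends:
  "hd_bound K w Ra Rb l 1
    = (1 - real w * l * ((2 * real K - 1) / Rb + 1 / Ra)) / (2 * ((real K + 1) / Rb + real w / Ra))"
  "hd_bound K w Ra Rb l (real K - 1)
    = (1 - real w * l * (3 / Rb + 1 / Ra)) / (2 * (real K + 1) / Rb + real K * real w / Ra)"
  unfolding hd_bound_def by (simp_all add: algebra_simps)

lemma fd_bound_at_ends:
  "fd_bound K w Ra Rb l 0
    = (1 - real w * l * (real K / Rb + 1 / Ra)) / ((real K + 1) / Rb + real w / Ra)"
  "fd_bound K w Ra Rb l (real K - 1)
    = (1 - real w * l * (1 / Rb + 1 / Ra)) / ((real K + 1) / Rb + real K * real w / Ra)"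
  unfolding fd_bound_def by (simp_all add: algebra_simps)

lemma divide_divide_swap:
  fixes a b c d :: real
  shows "(a / b) / (c / d) = (a / c) * (d / b)"
  by simp

theorem corollary1:
  fixes K w :: nat and Ra Rb lmin eta :: real
  assumes "K \<ge> 2" and "w \<ge> 1"
    and "0 < Ra" and "Ra < Rb"
    and "real w * Rb \<le> (real K + 1) * Ra"
    and "lmin > 0"
    and "P_feasible K w Ra Rb G_HD lmin"
    and "P_feasible K w Ra Rb G_FD lmin"
    and "opt_val K w Ra Rb G_HD lmin > 0"
    and "0 < eta" and "eta < 1"
  shows "(let tHD = opt_val K w Ra Rb G_HD lmin;
              tFD = opt_val K w Ra Rb G_FD lmin;
              dHD = - ln (1 - eta) / tHD;
              dFD = - ln (1 - eta) / tFD;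
              ell = dHD / dFD
          in ell =
            (if lmin \<le> Lambda1 K w Ra Rb then
               (1 - real w * lmin * (1 / Rb + 1 / Ra)) / (1 - real w * lmin * (3 / Rb + 1 / Ra))
               * ((2 * (real K + 1) / Rb + real K * real w / Ra)
                  / ((real K + 1) / Rb + real K * real w / Ra))
             else if lmin \<le> Lambda2 K w Ra Rb then
               (1 - real w * lmin * (1 / Rb + 1 / Ra))
                 / (1 - real w * lmin * ((2 * real K - 1) / Rb + 1 / Ra))
               * ((2 * (real K + 1) / Rb + 2 * real w / Ra)
                  / ((real K + 1) / Rb + real K * real w / Ra))
             else
               2 * ((1 - real w * lmin * (real K / Rb + 1 / Ra))
                 / (1 - real w * lmin * ((2 * real K - 1) / Rb + 1 / Ra)))))"
proof -
  have "0 < Rb" "0 \<le> lmin" using assms by auto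
  have ell: "(- ln (1 - eta) / opt_val K w Ra Rb G_HD lmin)
      / (- ln (1 - eta) / opt_val K w Ra Rb G_FD lmin)
      = opt_val K w Ra Rb G_FD lmin / opt_val K w Ra Rb G_HD lmin"
    using assms by (simp add: divide_divide_swap)
  have "0 < (real K + 1) / Rb + real w / Ra" using \<open>0 < Rb\<close> assms by (intro add_pos_nonneg) auto
  then have two: "2 * ((real K + 1) / Rb + real w / Ra) / ((real K + 1) / Rb + real w / Ra) = 2"
    by (intro nonzero_mult_div_cancel_right) simp
  note tHD = opt_val_HD[OF assms(1-3) \<open>0 < Rb\<close> assms(5) \<open>0 \<le> lmin\<close> assms(7)]
  note tFD = opt_val_FD[OF assms(1-3) \<open>0 < Rb\<close> assms(5) \<open>0 \<le> lmin\<close> assms(8)]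
  note bounds = hd_bound_at_ends fd_bound_at_ends divide_divide_swap
  consider (low) "lmin \<le> Lambda1 K w Ra Rb"
    | (mid) "\<not> lmin \<le> Lambda1 K w Ra Rb" "lmin \<le> Lambda2 K w Ra Rb"
    | (high) "\<not> lmin \<le> Lambda1 K w Ra Rb" "\<not> lmin \<le> Lambda2 K w Ra Rb"
    by blast
  then show ?thesis
  proof cases
    case low
    moreover have "lmin \<le> Lambda2 K w Ra Rb"
      using low Lambda1_le_Lambda2[OF assms(3) \<open>0 < Rb\<close>] by (rule order_trans)
    ultimately show ?thesis unfolding Let_def ell unfolding tHD tFD bounds by simp
  next
    case mid
    then show ?thesis unfolding Let_def ell unfolding tHD tFD bounds by simp
  next
    case high
    show ?thesis unfolding Let_def ell unfolding tHD tFD if_not_P[OF high(1)] if_not_P[OF high(2)] bounds two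
      by (rule mult.commute)
  qed
qed

end
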